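(* Let $\mathcal{C}$ be a bicomplete category with splitting and disjoint coproducts. Then the identity functor of $\mathcal{C}$ is a left Quillen equivalence from the generalized core model structure to the generalized cocore model structure.
   Context: Bicomplete means having all finite limits and finite colimits. In both structures the weak equivalences are the morphisms $f:A\to B$ for which some morphism $B\to A$ exists. Generalized core model structure: cofibrations are the morphisms with the left lifting property against all retractions, fibrations are those with the right lifting property against all cofibrations that are weak equivalences (its acyclic fibrations are the retractions). Generalized cocore model structure: fibrations are the morphisms with the right lifting property against all sections, cofibrations are those with the left lifting property against all fibrations that are weak equivalences (its acyclic cofibrations are the sections). Splitting coproducts: every $f:X\to A\sqcup B$ is isomorphic to $f_L\sqcup f_R$ with $f_L:X_L\to A$, $f_R:X_R\to B$, $X\cong X_L\sqcup X_R$. Disjoint coproducts: coproduct injections are monic, the pullback of $i_1:A\to A\sqcup B$ and $i_2:B\to A\sqcup B$ is the initial object, and the pullback of $i_1$ along itself (resp. $i_2$ along itself) is $A$ (resp. $B$) with identity maps. *)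

theory Defs
  imports Main
begin

record ('o, 'a) cat =
  Obj  :: "'o set"
  Arr  :: "'a set"
  Dom  :: "'a \<Rightarrow> 'o"
  Cod  :: "'a \<Rightarrow> 'o"
  Id   :: "'o \<Rightarrow> 'a"
  Comp :: "'a \<Rightarrow> 'a \<Rightarrow> 'a"   (* Comp C g f = g o f, for Cod f = Dom g *)

definition hom :: "('o, 'a) cat \<Rightarrow> 'o \<Rightarrow> 'o \<Rightarrow> 'a set" where
  "hom C X Y = {f \<in> Arr C. Dom C f = X \<and> Cod C f = Y}"

definition category :: "('o, 'a) cat \<Rightarrow> bool" where
  "category C \<longleftrightarrow>
     (\<forall>f \<in> Arr C. Dom C f \<in> Obj C \<and> Cod C f \<in> Obj C) \<and>
     (\<forall>X \<in> Obj C. Id C X \<in> hom C X X) \<and>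
     (\<forall>f \<in> Arr C. \<forall>g \<in> Arr C. Cod C f = Dom C g \<longrightarrow> Comp C g f \<in> hom C (Dom C f) (Cod C g)) \<and>
     (\<forall>f \<in> Arr C. Comp C (Id C (Cod C f)) f = f \<and> Comp C f (Id C (Dom C f)) = f) \<and>
     (\<forall>f \<in> Arr C. \<forall>g \<in> Arr C. \<forall>h \<in> Arr C. Cod C f = Dom C g \<longrightarrow> Cod C g = Dom C h \<longrightarrow>
        Comp C h (Comp C g f) = Comp C (Comp C h g) f)"

definition initial :: "('o, 'a) cat \<Rightarrow> 'o \<Rightarrow> bool" where
  "initial C I \<longleftrightarrow> I \<in> Obj C \<and> (\<forall>X \<in> Obj C. \<exists>!f. f \<in> hom C I X)"

definition terminal :: "('o, 'a) cat \<Rightarrow> 'o \<Rightarrow> bool" where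
  "terminal C T \<longleftrightarrow> T \<in> Obj C \<and> (\<forall>X \<in> Obj C. \<exists>!f. f \<in> hom C X T)"

definition is_coproduct :: "('o, 'a) cat \<Rightarrow> 'o \<Rightarrow> 'o \<Rightarrow> 'o \<Rightarrow> 'a \<Rightarrow> 'a \<Rightarrow> bool" where
  "is_coproduct C A B P i1 i2 \<longleftrightarrow>
     i1 \<in> hom C A P \<and> i2 \<in> hom C B P \<and>
     (\<forall>Z \<in> Obj C. \<forall>f \<in> hom C A Z. \<forall>g \<in> hom C B Z.
        \<exists>!h. h \<in> hom C P Z \<and> Comp C h i1 = f \<and> Comp C h i2 = g)"

definition is_product :: "('o, 'a) cat \<Rightarrow> 'o \<Rightarrow> 'o \<Rightarrow> 'o \<Rightarrow> 'a \<Rightarrow> 'a \<Rightarrow> bool" where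
  "is_product C A B P p1 p2 \<longleftrightarrow>
     p1 \<in> hom C P A \<and> p2 \<in> hom C P B \<and>
     (\<forall>Z \<in> Obj C. \<forall>f \<in> hom C Z A. \<forall>g \<in> hom C Z B.
        \<exists>!h. h \<in> hom C Z P \<and> Comp C p1 h = f \<and> Comp C p2 h = g)"

definition is_equalizer :: "('o, 'a) cat \<Rightarrow> 'a \<Rightarrow> 'a \<Rightarrow> 'o \<Rightarrow> 'a \<Rightarrow> bool" where
  "is_equalizer C f g E e \<longleftrightarrow>
     e \<in> hom C E (Dom C f) \<and> Comp C f e = Comp C g e \<and>
     (\<forall>Z \<in> Obj C. \<forall>k \<in> hom C Z (Dom C f). Comp C f k = Comp C g k \<longrightarrow>
        (\<exists>!h. h \<in> hom C Z E \<and> Comp C e h = k))"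

definition is_coequalizer :: "('o, 'a) cat \<Rightarrow> 'a \<Rightarrow> 'a \<Rightarrow> 'o \<Rightarrow> 'a \<Rightarrow> bool" where
  "is_coequalizer C f g Q q \<longleftrightarrow>
     q \<in> hom C (Cod C f) Q \<and> Comp C q f = Comp C q g \<and>
     (\<forall>Z \<in> Obj C. \<forall>k \<in> hom C (Cod C f) Z. Comp C k f = Comp C k g \<longrightarrow>
        (\<exists>!h. h \<in> hom C Q Z \<and> Comp C h q = k))"

definition is_pullback :: "('o, 'a) cat \<Rightarrow> 'a \<Rightarrow> 'a \<Rightarrow> 'o \<Rightarrow> 'a \<Rightarrow> 'a \<Rightarrow> bool" where
  "is_pullback C f g P p q \<longleftrightarrow>
     p \<in> hom C P (Dom C f) \<and> q \<in> hom C P (Dom C g) \<and> Comp C f p = Comp C g q \<and>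
     (\<forall>Z \<in> Obj C. \<forall>u \<in> hom C Z (Dom C f). \<forall>v \<in> hom C Z (Dom C g).
        Comp C f u = Comp C g v \<longrightarrow> (\<exists>!h. h \<in> hom C Z P \<and> Comp C p h = u \<and> Comp C q h = v))"

text \<open>Finitely complete and cocomplete (terminal/initial object, binary
  (co)products and (co)equalizers of parallel pairs).\<close>
definition bicomplete :: "('o, 'a) cat \<Rightarrow> bool" where
  "bicomplete C \<longleftrightarrow>
     (\<exists>T. terminal C T) \<and> (\<exists>I. initial C I) \<and>
     (\<forall>A \<in> Obj C. \<forall>B \<in> Obj C. \<exists>P p1 p2. is_product C A B P p1 p2) \<and>
     (\<forall>A \<in> Obj C. \<forall>B \<in> Obj C. \<exists>P i1 i2. is_coproduct C A B P i1 i2) \<and>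
     (\<forall>f \<in> Arr C. \<forall>g \<in> Arr C. Dom C f = Dom C g \<longrightarrow> Cod C f = Cod C g \<longrightarrow>
        (\<exists>E e. is_equalizer C f g E e) \<and> (\<exists>Q q. is_coequalizer C f g Q q))"

text \<open>Every f : X \<rightarrow> A \<squnion> B is isomorphic (over A \<squnion> B) to f_L \<squnion> f_R with
  X \<cong> X_L \<squnion> X_R: equivalently X is a coproduct of X_L, X_R with injections
  j1, j2 such that f o j1 = i1 o f_L and f o j2 = i2 o f_R.\<close>
definition splitting_coproducts :: "('o, 'a) cat \<Rightarrow> bool" where
  "splitting_coproducts C \<longleftrightarrow>
     (\<forall>A B P i1 i2. is_coproduct C A B P i1 i2 \<longrightarrow>
        (\<forall>f \<in> Arr C. Cod C f = P \<longrightarrow>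
           (\<exists>XL XR j1 j2 fL fR.
              is_coproduct C XL XR (Dom C f) j1 j2 \<and>
              fL \<in> hom C XL A \<and> fR \<in> hom C XR B \<and>
              Comp C f j1 = Comp C i1 fL \<and> Comp C f j2 = Comp C i2 fR)))"

definition monic :: "('o, 'a) cat \<Rightarrow> 'a \<Rightarrow> bool" where
  "monic C m \<longleftrightarrow> m \<in> Arr C \<and>
     (\<forall>u \<in> Arr C. \<forall>v \<in> Arr C. Cod C u = Dom C m \<longrightarrow> Cod C v = Dom C m \<longrightarrow>
        Comp C m u = Comp C m v \<longrightarrow> u = v)"

definition disjoint_coproducts :: "('o, 'a) cat \<Rightarrow> bool" where
  "disjoint_coproducts C \<longleftrightarrow>
     (\<forall>A B P i1 i2. is_coproduct C A B P i1 i2 \<longrightarrow>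
        monic C i1 \<and> monic C i2 \<and>
        (\<forall>Q p q. is_pullback C i1 i2 Q p q \<longrightarrow> initial C Q) \<and>
        (\<exists>Q p q. is_pullback C i1 i2 Q p q) \<and>
        is_pullback C i1 i1 A (Id C A) (Id C A) \<and>
        is_pullback C i2 i2 B (Id C B) (Id C B))"

definition lifts :: "('o, 'a) cat \<Rightarrow> 'a \<Rightarrow> 'a \<Rightarrow> bool" where
  "lifts C i p \<longleftrightarrow>
     (\<forall>u \<in> hom C (Dom C i) (Dom C p). \<forall>v \<in> hom C (Cod C i) (Cod C p).
        Comp C p u = Comp C v i \<longrightarrow>
        (\<exists>h \<in> hom C (Cod C i) (Dom C p). Comp C h i = u \<and> Comp C p h = v))"

definition LLP :: "('o, 'a) cat \<Rightarrow> 'a set \<Rightarrow> 'a set" where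
  "LLP C S = {i \<in> Arr C. \<forall>p \<in> S. lifts C i p}"

definition RLP :: "('o, 'a) cat \<Rightarrow> 'a set \<Rightarrow> 'a set" where
  "RLP C S = {p \<in> Arr C. \<forall>i \<in> S. lifts C i p}"

definition retractions :: "('o, 'a) cat \<Rightarrow> 'a set" where
  "retractions C = {f \<in> Arr C. \<exists>s \<in> hom C (Cod C f) (Dom C f). Comp C f s = Id C (Cod C f)}"

definition sections :: "('o, 'a) cat \<Rightarrow> 'a set" where
  "sections C = {f \<in> Arr C. \<exists>r \<in> hom C (Cod C f) (Dom C f). Comp C r f = Id C (Dom C f)}"

definition weq :: "('o, 'a) cat \<Rightarrow> 'a set" where
  "weq C = {f \<in> Arr C. hom C (Cod C f) (Dom C f) \<noteq> {}}"

text \<open>A model structure is a triple (weak equivalences, cofibrations, fibrations).\<close>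
type_synonym 'a mstruct = "'a set \<times> 'a set \<times> 'a set"

definition core_ms :: "('o, 'a) cat \<Rightarrow> 'a mstruct" where
  "core_ms C = (let cof = LLP C (retractions C) in (weq C, cof, RLP C (cof \<inter> weq C)))"

definition cocore_ms :: "('o, 'a) cat \<Rightarrow> 'a mstruct" where
  "cocore_ms C = (let fib = RLP C (sections C) in (weq C, LLP C (fib \<inter> weq C), fib))"

definition is_retract_of :: "('o, 'a) cat \<Rightarrow> 'a \<Rightarrow> 'a \<Rightarrow> bool" where
  "is_retract_of C f g \<longleftrightarrow> f \<in> Arr C \<and> g \<in> Arr C \<and>
     (\<exists>a r b s. a \<in> hom C (Dom C f) (Dom C g) \<and> r \<in> hom C (Dom C g) (Dom C f) \<and>
        b \<in> hom C (Cod C f) (Cod C g) \<and> s \<in> hom C (Cod C g) (Cod C f) \<and>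
        Comp C r a = Id C (Dom C f) \<and> Comp C s b = Id C (Cod C f) \<and>
        Comp C g a = Comp C b f \<and> Comp C f r = Comp C s g)"

definition model_structure :: "('o, 'a) cat \<Rightarrow> 'a mstruct \<Rightarrow> bool" where
  "model_structure C M \<longleftrightarrow> (case M of (W, Cof, Fib) \<Rightarrow>
     W \<subseteq> Arr C \<and> Cof \<subseteq> Arr C \<and> Fib \<subseteq> Arr C \<and>
     (\<forall>f \<in> Arr C. \<forall>g \<in> Arr C. Cod C f = Dom C g \<longrightarrow>
        ((f \<in> W \<and> g \<in> W \<longrightarrow> Comp C g f \<in> W) \<and>
         (f \<in> W \<and> Comp C g f \<in> W \<longrightarrow> g \<in> W) \<and>
         (g \<in> W \<and> Comp C g f \<in> W \<longrightarrow> f \<in> W))) \<and>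
     (\<forall>f g. is_retract_of C f g \<longrightarrow>
        (g \<in> W \<longrightarrow> f \<in> W) \<and> (g \<in> Cof \<longrightarrow> f \<in> Cof) \<and> (g \<in> Fib \<longrightarrow> f \<in> Fib)) \<and>
     (\<forall>i \<in> Cof. \<forall>p \<in> Fib \<inter> W. lifts C i p) \<and>
     (\<forall>i \<in> Cof \<inter> W. \<forall>p \<in> Fib. lifts C i p) \<and>
     (\<forall>f \<in> Arr C. \<exists>i p. i \<in> Cof \<inter> W \<and> p \<in> Fib \<and> Cod C i = Dom C p \<and> Comp C p i = f) \<and>
     (\<forall>f \<in> Arr C. \<exists>i p. i \<in> Cof \<and> p \<in> Fib \<inter> W \<and> Cod C i = Dom C p \<and> Comp C p i = f))"

definition ms_we :: "'a mstruct \<Rightarrow> 'a set" where "ms_we M = fst M"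
definition ms_cof :: "'a mstruct \<Rightarrow> 'a set" where "ms_cof M = fst (snd M)"
definition ms_fib :: "'a mstruct \<Rightarrow> 'a set" where "ms_fib M = snd (snd M)"

definition cofibrant :: "('o, 'a) cat \<Rightarrow> 'a mstruct \<Rightarrow> 'o \<Rightarrow> bool" where
  "cofibrant C M X \<longleftrightarrow> (\<forall>I f. initial C I \<longrightarrow> f \<in> hom C I X \<longrightarrow> f \<in> ms_cof M)"

definition fibrant :: "('o, 'a) cat \<Rightarrow> 'a mstruct \<Rightarrow> 'o \<Rightarrow> bool" where
  "fibrant C M X \<longleftrightarrow> (\<forall>T f. terminal C T \<longrightarrow> f \<in> hom C X T \<longrightarrow> f \<in> ms_fib M)"

text \<open>The identity functor (with the identity adjunction) is a left Quillen
  equivalence from M1 to M2: both are model structures, the identity preserves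
  cofibrations and acyclic cofibrations, and for M1-cofibrant A and M2-fibrant B
  a map f : A \<rightarrow> B is an M2-weak equivalence iff its adjunct (f itself) is an
  M1-weak equivalence.\<close>
definition id_left_quillen_equivalence :: "('o, 'a) cat \<Rightarrow> 'a mstruct \<Rightarrow> 'a mstruct \<Rightarrow> bool" where
  "id_left_quillen_equivalence C M1 M2 \<longleftrightarrow>
     model_structure C M1 \<and> model_structure C M2 \<and>
     ms_cof M1 \<subseteq> ms_cof M2 \<and>
     ms_cof M1 \<inter> ms_we M1 \<subseteq> ms_cof M2 \<inter> ms_we M2 \<and>
     (\<forall>A B f. cofibrant C M1 A \<longrightarrow> fibrant C M2 B \<longrightarrow> f \<in> hom C A B \<longrightarrow>
        (f \<in> ms_we M2 \<longleftrightarrow> f \<in> ms_we M1))"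

end

theory Submission
  imports Defs
begin

text \<open>Both structures have the same weak equivalences, so the theorem reduces to showing that
  both are model structures and that every core cofibration is a cocore cofibration. The latter
  holds because cocore acyclic fibrations are retractions: a weak equivalence \<open>p : X \<rightarrow> Y\<close> lifting
  against the split injection \<open>X \<rightarrow> X \<squnion> Y\<close> has a section. Core factorizations are
  \<open>A \<rightarrow> A \<squnion> B \<rightarrow> B\<close> and \<open>A \<rightarrow> A \<squnion> (A \<times> B) \<rightarrow> B\<close>; the cocore structure is the core structure of the
  opposite category.\<close>

locale categorical =
  fixes C :: "('o, 'a) cat"
  assumes category: "category C"
begin

abbreviation arr_comp (infixr "\<cdot>" 55) where "g \<cdot> f \<equiv> Comp C g f"

lemma arr_in_hom: "f \<in> Arr C \<Longrightarrow> f \<in> hom C (Dom C f) (Cod C f)"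
  by (simp add: hom_def)

lemma in_homD: "f \<in> hom C X Y \<Longrightarrow> f \<in> Arr C \<and> Dom C f = X \<and> Cod C f = Y"
  by (simp add: hom_def)

lemma in_hom_Obj: "f \<in> hom C X Y \<Longrightarrow> X \<in> Obj C \<and> Y \<in> Obj C"
  using category unfolding category_def hom_def by auto

lemma comp_in_hom: "f \<in> hom C X Y \<Longrightarrow> g \<in> hom C Y Z \<Longrightarrow> g \<cdot> f \<in> hom C X Z"
  using category unfolding category_def hom_def by auto

lemma id_in_hom: "X \<in> Obj C \<Longrightarrow> Id C X \<in> hom C X X"
  using category unfolding category_def by auto

lemma comp_id_left: "f \<in> hom C X Y \<Longrightarrow> Id C Y \<cdot> f = f"
  using category unfolding category_def hom_def by auto

lemma comp_id_right: "f \<in> hom C X Y \<Longrightarrow> f \<cdot> Id C X = f"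
  using category unfolding category_def hom_def by auto

lemma comp_assoc:
  "f \<in> hom C X Y \<Longrightarrow> g \<in> hom C Y Z \<Longrightarrow> h \<in> hom C Z W \<Longrightarrow> h \<cdot> (g \<cdot> f) = (h \<cdot> g) \<cdot> f"
  using category unfolding category_def hom_def by auto

lemma coproduct_injections:
  "is_coproduct C A B P i1 i2 \<Longrightarrow> i1 \<in> hom C A P \<and> i2 \<in> hom C B P"
  unfolding is_coproduct_def by auto

lemma coproduct_copair:
  assumes cp: "is_coproduct C A B P i1 i2" and f: "f \<in> hom C A Z" and g: "g \<in> hom C B Z"
  obtains h where "h \<in> hom C P Z" "h \<cdot> i1 = f" "h \<cdot> i2 = g"
  using cp f g in_hom_Obj[OF f] unfolding is_coproduct_def by blast

lemma coproduct_ext: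
  assumes cp: "is_coproduct C A B P i1 i2" and h: "h \<in> hom C P Z" and h': "h' \<in> hom C P Z"
    and "h \<cdot> i1 = h' \<cdot> i1" and "h \<cdot> i2 = h' \<cdot> i2"
  shows "h = h'"
proof -
  have i: "i1 \<in> hom C A P" "i2 \<in> hom C B P" using coproduct_injections[OF cp] by auto
  have "\<exists>!k. k \<in> hom C P Z \<and> k \<cdot> i1 = h \<cdot> i1 \<and> k \<cdot> i2 = h \<cdot> i2"
    using cp in_hom_Obj[OF h] comp_in_hom[OF i(1) h] comp_in_hom[OF i(2) h]
    unfolding is_coproduct_def by blast
  then show ?thesis using assms by metis
qed

lemma product_projections:
  "is_product C A B P p1 p2 \<Longrightarrow> p1 \<in> hom C P A \<and> p2 \<in> hom C P B"
  unfolding is_product_def by auto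

lemma product_pair:
  assumes pr: "is_product C A B P p1 p2" and f: "f \<in> hom C Z A" and g: "g \<in> hom C Z B"
  obtains h where "h \<in> hom C Z P" "p1 \<cdot> h = f" "p2 \<cdot> h = g"
  using pr f g in_hom_Obj[OF f] unfolding is_product_def by blast

lemma liftsI:
  assumes "i \<in> hom C A B" and "p \<in> hom C X Y"
    and "\<And>u v. u \<in> hom C A X \<Longrightarrow> v \<in> hom C B Y \<Longrightarrow> p \<cdot> u = v \<cdot> i \<Longrightarrow>
           \<exists>h \<in> hom C B X. h \<cdot> i = u \<and> p \<cdot> h = v"
  shows "lifts C i p"
  using assms unfolding lifts_def hom_def by auto

lemma liftsE:
  assumes "lifts C i p" and "i \<in> hom C A B" and "p \<in> hom C X Y"
    and "u \<in> hom C A X" and "v \<in> hom C B Y" and "p \<cdot> u = v \<cdot> i"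
  obtains h where "h \<in> hom C B X" "h \<cdot> i = u" "p \<cdot> h = v"
  using assms unfolding lifts_def hom_def by auto

lemma weqI: "f \<in> hom C X Y \<Longrightarrow> g \<in> hom C Y X \<Longrightarrow> f \<in> weq C"
  unfolding weq_def hom_def by auto

lemma weqE:
  assumes "f \<in> weq C"
  obtains g where "g \<in> hom C (Cod C f) (Dom C f)"
  using assms unfolding weq_def by auto

lemma retractions_arr: "retractions C \<subseteq> Arr C"
  unfolding retractions_def by auto

lemma sections_weq: "sections C \<subseteq> weq C"
  unfolding sections_def weq_def by auto

lemma retractions_weq: "retractions C \<subseteq> weq C"
  unfolding retractions_def weq_def by auto

lemma weq_two_out_of_three:
  assumes "f \<in> Arr C" and "g \<in> Arr C" and "Cod C f = Dom C g"
  shows "(f \<in> weq C \<and> g \<in> weq C \<longrightarrow> g \<cdot> f \<in> weq C) \<and>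
         (f \<in> weq C \<and> g \<cdot> f \<in> weq C \<longrightarrow> g \<in> weq C) \<and>
         (g \<in> weq C \<and> g \<cdot> f \<in> weq C \<longrightarrow> f \<in> weq C)"
proof -
  have f: "f \<in> hom C (Dom C f) (Cod C f)" and g: "g \<in> hom C (Cod C f) (Cod C g)"
    using assms by (simp_all add: hom_def)
  have gf: "g \<cdot> f \<in> hom C (Dom C f) (Cod C g)" using comp_in_hom[OF f g] .
  have weq_iff: "h \<in> weq C \<longleftrightarrow> hom C V U \<noteq> {}" if "h \<in> hom C U V" for h U V
    using that unfolding weq_def hom_def by auto
  show ?thesis unfolding weq_iff[OF f] weq_iff[OF g] weq_iff[OF gf]
    using f g by (blast intro: comp_in_hom)
qed

lemma retract_weq:
  assumes "is_retract_of C f g" and "g \<in> weq C"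
  shows "f \<in> weq C"
proof -
  obtain r b where f: "f \<in> hom C (Dom C f) (Cod C f)"
    and r: "r \<in> hom C (Dom C g) (Dom C f)" and b: "b \<in> hom C (Cod C f) (Cod C g)"
    using assms(1) unfolding is_retract_of_def hom_def by auto
  obtain t where "t \<in> hom C (Cod C g) (Dom C g)" using weqE[OF assms(2)] .
  then show ?thesis using weqI[OF f comp_in_hom[OF comp_in_hom[OF b] r]] by blast
qed

lemma retract_LLP:
  assumes R: "is_retract_of C f g" and gS: "g \<in> LLP C S" and S: "S \<subseteq> Arr C"
  shows "f \<in> LLP C S"
proof -
  obtain a r b s where f: "f \<in> hom C (Dom C f) (Cod C f)" and g: "g \<in> hom C (Dom C g) (Cod C g)"
    and a: "a \<in> hom C (Dom C f) (Dom C g)" and r: "r \<in> hom C (Dom C g) (Dom C f)"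
    and b: "b \<in> hom C (Cod C f) (Cod C g)" and s: "s \<in> hom C (Cod C g) (Cod C f)"
    and ra: "r \<cdot> a = Id C (Dom C f)" and sb: "s \<cdot> b = Id C (Cod C f)"
    and ga: "g \<cdot> a = b \<cdot> f" and fr: "f \<cdot> r = s \<cdot> g"
    using R unfolding is_retract_of_def hom_def by auto
  have "lifts C f p" if "p \<in> S" for p
  proof -
    have p: "p \<in> hom C (Dom C p) (Cod C p)" using \<open>p \<in> S\<close> S arr_in_hom by auto
    have lg: "lifts C g p" using gS \<open>p \<in> S\<close> unfolding LLP_def by auto
    show ?thesis
    proof (rule liftsI[OF f p])
      fix u v assume u: "u \<in> hom C (Dom C f) (Dom C p)" and v: "v \<in> hom C (Cod C f) (Cod C p)"
        and sq: "p \<cdot> u = v \<cdot> f"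
      have "p \<cdot> (u \<cdot> r) = (v \<cdot> f) \<cdot> r" using comp_assoc[OF r u p] sq by simp
      also have "\<dots> = (v \<cdot> s) \<cdot> g" using comp_assoc[OF r f v] comp_assoc[OF g s v] fr by simp
      finally obtain k where k: "k \<in> hom C (Cod C g) (Dom C p)" "k \<cdot> g = u \<cdot> r" "p \<cdot> k = v \<cdot> s"
        using liftsE[OF lg g p comp_in_hom[OF r u] comp_in_hom[OF s v]] by blast
      have "(k \<cdot> b) \<cdot> f = (u \<cdot> r) \<cdot> a" using comp_assoc[OF f b k(1)] comp_assoc[OF a g k(1)] ga k(2)
        by simp
      also have "\<dots> = u" using comp_assoc[OF a r u] ra comp_id_right[OF u] by simp
      finally have "(k \<cdot> b) \<cdot> f = u" .
      moreover have "p \<cdot> (k \<cdot> b) = v"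
        using comp_assoc[OF b k(1) p] k(3) comp_assoc[OF b s v] sb comp_id_right[OF v] by simp
      ultimately show "\<exists>h \<in> hom C (Cod C f) (Dom C p). h \<cdot> f = u \<and> p \<cdot> h = v"
        using comp_in_hom[OF b k(1)] by blast
    qed
  qed
  then show ?thesis unfolding LLP_def using f by (auto simp: hom_def)
qed

end

definition opposite :: "('o, 'a) cat \<Rightarrow> ('o, 'a) cat" where
  "opposite C = \<lparr>Obj = Obj C, Arr = Arr C, Dom = Cod C, Cod = Dom C, Id = Id C,
                  Comp = (\<lambda>g f. Comp C f g)\<rparr>"

lemma opposite_simps [simp]:
  "Obj (opposite C) = Obj C" "Arr (opposite C) = Arr C" "Dom (opposite C) = Cod C"
  "Cod (opposite C) = Dom C" "Id (opposite C) = Id C" "Comp (opposite C) g f = Comp C f g"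
  by (simp_all add: opposite_def)

lemma opposite_opposite [simp]: "opposite (opposite C) = C"
  by (simp add: opposite_def)

lemma hom_opposite [simp]: "hom (opposite C) X Y = hom C Y X"
  by (auto simp: hom_def)

lemma category_opposite: "category C \<Longrightarrow> category (opposite C)"
  unfolding category_def hom_def by auto

lemma initial_opposite [simp]: "initial (opposite C) = terminal C"
  by (simp add: initial_def terminal_def fun_eq_iff)

lemma terminal_opposite [simp]: "terminal (opposite C) = initial C"
  by (simp add: initial_def terminal_def fun_eq_iff)

lemma is_coproduct_opposite [simp]: "is_coproduct (opposite C) = is_product C"
  by (simp add: is_coproduct_def is_product_def fun_eq_iff)

lemma is_product_opposite [simp]: "is_product (opposite C) = is_coproduct C"
  by (simp add: is_coproduct_def is_product_def fun_eq_iff)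

lemma is_equalizer_opposite [simp]: "is_equalizer (opposite C) = is_coequalizer C"
  by (simp add: is_equalizer_def is_coequalizer_def fun_eq_iff)

lemma is_coequalizer_opposite [simp]: "is_coequalizer (opposite C) = is_equalizer C"
  by (simp add: is_equalizer_def is_coequalizer_def fun_eq_iff)

lemma bicomplete_opposite: "bicomplete C \<Longrightarrow> bicomplete (opposite C)"
  unfolding bicomplete_def by simp

lemma lifts_opposite_imp:
  assumes "lifts (opposite C) i p"
  shows "lifts C p i"
  unfolding lifts_def
proof (intro ballI impI)
  fix u v
  assume u: "u \<in> hom C (Dom C p) (Dom C i)" and v: "v \<in> hom C (Cod C p) (Cod C i)"
    and sq: "Comp C i u = Comp C v p"
  have "\<exists>h \<in> hom C (Cod C p) (Dom C i). Comp C i h = v \<and> Comp C h p = u"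
    using assms[unfolded lifts_def, simplified, rule_format, OF v u sq[symmetric]] .
  then show "\<exists>h \<in> hom C (Cod C p) (Dom C i). Comp C h p = u \<and> Comp C i h = v"
    by blast
qed

lemma lifts_opposite [simp]: "lifts (opposite C) i p = lifts C p i"
  using lifts_opposite_imp[of C i p] lifts_opposite_imp[of "opposite C" p i] by auto

lemma LLP_opposite [simp]: "LLP (opposite C) S = RLP C S"
  by (simp add: LLP_def RLP_def)

lemma RLP_opposite [simp]: "RLP (opposite C) S = LLP C S"
  by (simp add: LLP_def RLP_def)

lemma retractions_opposite [simp]: "retractions (opposite C) = sections C"
  by (simp add: retractions_def sections_def)

lemma weq_opposite [simp]: "weq (opposite C) = weq C"
  by (simp add: weq_def)

lemma is_retract_of_opposite_imp:
  assumes "is_retract_of C f g"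
  shows "is_retract_of (opposite C) f g"
proof -
  obtain a r b s where "f \<in> Arr C" "g \<in> Arr C"
    and "a \<in> hom C (Dom C f) (Dom C g)" "r \<in> hom C (Dom C g) (Dom C f)"
    and "b \<in> hom C (Cod C f) (Cod C g)" "s \<in> hom C (Cod C g) (Cod C f)"
    and "Comp C r a = Id C (Dom C f)" "Comp C s b = Id C (Cod C f)"
    and "Comp C g a = Comp C b f" "Comp C f r = Comp C s g"
    using assms unfolding is_retract_of_def by blast
  then show ?thesis
    unfolding is_retract_of_def opposite_simps hom_opposite
    by (intro conjI exI[of _ s] exI[of _ b] exI[of _ r] exI[of _ a]) simp_all
qed

lemma is_retract_of_opposite [simp]: "is_retract_of (opposite C) f g = is_retract_of C f g"
  using is_retract_of_opposite_imp[of C f g] is_retract_of_opposite_imp[of "opposite C" f g]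
  by auto

text \<open>Dualizing swaps the two lifting axioms and the two factorization axioms.\<close>
lemma model_structure_opposite:
  "model_structure (opposite C) (W, Cof, Fib) \<Longrightarrow> model_structure C (W, Fib, Cof)"
  unfolding model_structure_def prod.case opposite_simps lifts_opposite is_retract_of_opposite
  apply (elim conjE)
  apply (intro conjI)
        apply assumption+
      subgoal by (intro ballI impI) (metis (no_types))
     subgoal by blast
    subgoal by blast
   subgoal by blast
  subgoal by (intro ballI) (metis (no_types))
  subgoal by (intro ballI) (metis (no_types))
  done

context categorical
begin

lemma retract_RLP:
  assumes "is_retract_of C f g" and "g \<in> RLP C S" and "S \<subseteq> Arr C"
  shows "f \<in> RLP C S"
proof -
  interpret op: categorical "opposite C"
    using category_opposite[OF category] by unfold_locales
  have "f \<in> LLP (opposite C) S"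
    by (rule op.retract_LLP) (use assms in simp_all)
  then show ?thesis by simp
qed

lemma coproduct_injection_LLP_retractions:
  assumes cp: "is_coproduct C A B P i1 i2"
  shows "i1 \<in> LLP C (retractions C)"
proof -
  have i: "i1 \<in> hom C A P" "i2 \<in> hom C B P" using coproduct_injections[OF cp] by auto
  have "lifts C i1 p" if "p \<in> retractions C" for p
  proof -
    obtain s where p: "p \<in> hom C (Dom C p) (Cod C p)" and s: "s \<in> hom C (Cod C p) (Dom C p)"
      and ps: "p \<cdot> s = Id C (Cod C p)"
      using \<open>p \<in> retractions C\<close> unfolding retractions_def by (auto simp: hom_def)
    show ?thesis
    proof (rule liftsI[OF i(1) p])
      fix u v assume u: "u \<in> hom C A (Dom C p)" and v: "v \<in> hom C P (Cod C p)"
        and sq: "p \<cdot> u = v \<cdot> i1"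
      have vi2: "v \<cdot> i2 \<in> hom C B (Cod C p)" using comp_in_hom[OF i(2) v] .
      obtain h where h: "h \<in> hom C P (Dom C p)" "h \<cdot> i1 = u" "h \<cdot> i2 = s \<cdot> (v \<cdot> i2)"
        using coproduct_copair[OF cp u comp_in_hom[OF vi2 s]] by blast
      have "p \<cdot> h = v"
      proof (rule coproduct_ext[OF cp comp_in_hom[OF h(1) p] v])
        show "(p \<cdot> h) \<cdot> i1 = v \<cdot> i1" using comp_assoc[OF i(1) h(1) p] h(2) sq by simp
        show "(p \<cdot> h) \<cdot> i2 = v \<cdot> i2"
          using comp_assoc[OF i(2) h(1) p] h(3) comp_assoc[OF vi2 s p] ps comp_id_left[OF vi2]
          by simp
      qed
      then show "\<exists>h \<in> hom C P (Dom C p). h \<cdot> i1 = u \<and> p \<cdot> h = v" using h by blast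
    qed
  qed
  then show ?thesis unfolding LLP_def using i(1) by (auto simp: hom_def)
qed

lemma coproduct_injection_section:
  assumes cp: "is_coproduct C A B P i1 i2" and s: "s \<in> hom C B A"
  shows "i1 \<in> sections C"
proof -
  have i1: "i1 \<in> hom C A P" using coproduct_injections[OF cp] by auto
  obtain r where "r \<in> hom C P A" "r \<cdot> i1 = Id C A"
    using coproduct_copair[OF cp id_in_hom s] in_hom_Obj[OF s] by blast
  then show ?thesis using i1 unfolding sections_def hom_def by auto
qed

text \<open>The section is obtained by lifting in the square with sides \<open>id\<^sub>X\<close> and \<open>[p, id\<^sub>Y]\<close>.\<close>
lemma retraction_if_lifts_coproduct_injection:
  assumes cp: "is_coproduct C X Y P i1 i2" and p: "p \<in> hom C X Y" and "lifts C i1 p"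
  shows "p \<in> retractions C"
proof -
  have i: "i1 \<in> hom C X P" "i2 \<in> hom C Y P" using coproduct_injections[OF cp] by auto
  have XY: "X \<in> Obj C" "Y \<in> Obj C" using in_hom_Obj[OF p] by auto
  obtain q where q: "q \<in> hom C P Y" "q \<cdot> i1 = p" "q \<cdot> i2 = Id C Y"
    using coproduct_copair[OF cp p id_in_hom[OF XY(2)]] by blast
  have "p \<cdot> Id C X = q \<cdot> i1" using comp_id_right[OF p] q(2) by simp
  then obtain h where h: "h \<in> hom C P X" "p \<cdot> h = q"
    using liftsE[OF \<open>lifts C i1 p\<close> i(1) p id_in_hom[OF XY(1)] q(1)] by blast
  have "p \<cdot> (h \<cdot> i2) = Id C Y" using comp_assoc[OF i(2) h(1) p] h(2) q(3) by simp
  then show ?thesis using p comp_in_hom[OF i(2) h(1)] unfolding retractions_def hom_def by auto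
qed

text \<open>A core cofibration \<open>i : A \<rightarrow> B\<close> is a retract of the coproduct injection
  \<open>A \<rightarrow> A \<squnion> B\<close>: lift against the retraction \<open>[i, id\<^sub>B]\<close>.\<close>
lemma core_cofibration_copair_section:
  assumes "i \<in> LLP C (retractions C)" and i: "i \<in> hom C A B"
    and cp: "is_coproduct C A B R k1 k2"
    and \<rho>: "\<rho> \<in> hom C R B" "\<rho> \<cdot> k1 = i" "\<rho> \<cdot> k2 = Id C B"
  obtains h where "h \<in> hom C B R" "h \<cdot> i = k1" "\<rho> \<cdot> h = Id C B"
proof -
  have k: "k1 \<in> hom C A R" "k2 \<in> hom C B R" using coproduct_injections[OF cp] by auto
  have "\<rho> \<in> retractions C" using \<rho> k(2) unfolding retractions_def hom_def by auto
  then have "lifts C i \<rho>" using assms(1) unfolding LLP_def by auto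
  moreover have "\<rho> \<cdot> k1 = Id C B \<cdot> i" using \<rho>(2) comp_id_left[OF i] by simp
  ultimately show ?thesis
    using liftsE[OF _ i \<rho>(1) k(1) id_in_hom] in_hom_Obj[OF i] that by blast
qed

lemma retractions_RLP_LLP: "retractions C \<subseteq> RLP C (LLP C (retractions C) \<inter> S)"
  unfolding LLP_def RLP_def retractions_def by auto

end

locale finitely_bicomplete = categorical +
  assumes bicomplete: "bicomplete C"
begin

lemma coproduct_exists:
  assumes "A \<in> Obj C" "B \<in> Obj C"
  obtains P i1 i2 where "is_coproduct C A B P i1 i2"
  using bicomplete assms unfolding bicomplete_def by blast

lemma product_exists:
  assumes "A \<in> Obj C" "B \<in> Obj C"
  obtains P p1 p2 where "is_product C A B P p1 p2"
  using bicomplete assms unfolding bicomplete_def by blast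

lemma core_acyclic_fibration_retraction:
  assumes "p \<in> RLP C (LLP C (retractions C) \<inter> weq C)" and "p \<in> weq C"
  shows "p \<in> retractions C"
proof -
  have p: "p \<in> hom C (Dom C p) (Cod C p)" using assms(1) arr_in_hom unfolding RLP_def by auto
  obtain s where s: "s \<in> hom C (Cod C p) (Dom C p)" using weqE[OF assms(2)] .
  obtain P i1 i2 where cp: "is_coproduct C (Dom C p) (Cod C p) P i1 i2"
    using coproduct_exists in_hom_Obj[OF p] by blast
  have "i1 \<in> LLP C (retractions C) \<inter> weq C"
    using coproduct_injection_LLP_retractions[OF cp] coproduct_injection_section[OF cp s]
      sections_weq by blast
  then show ?thesis
    using retraction_if_lifts_coproduct_injection[OF cp p] assms(1) unfolding RLP_def by blast
qed

lemma cocore_acyclic_fibration_retraction: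
  assumes "p \<in> RLP C (sections C)" and "p \<in> weq C"
  shows "p \<in> retractions C"
proof -
  have p: "p \<in> hom C (Dom C p) (Cod C p)" using assms(1) arr_in_hom unfolding RLP_def by auto
  obtain s where s: "s \<in> hom C (Cod C p) (Dom C p)" using weqE[OF assms(2)] .
  obtain P i1 i2 where cp: "is_coproduct C (Dom C p) (Cod C p) P i1 i2"
    using coproduct_exists in_hom_Obj[OF p] by blast
  show ?thesis
    using retraction_if_lifts_coproduct_injection[OF cp p] coproduct_injection_section[OF cp s]
      assms(1) unfolding RLP_def by blast
qed

text \<open>Given a square from a core acyclic cofibration \<open>i : A' \<rightarrow> B'\<close> with a map \<open>g : B' \<rightarrow> A'\<close>,
  the lift is \<open>[u, j\<^sub>2 \<circ> \<langle>r \<circ> u \<circ> g, v\<rangle>] \<circ> h\<close>, where \<open>r = [id\<^sub>A, \<pi>\<^sub>1]\<close> and \<open>h\<close> is the section of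
  \<open>[i, id]\<close> over \<open>A'\<close>.\<close>
lemma copair_projection_core_fibration:
  assumes pr: "is_product C A B Q \<pi>1 \<pi>2" and cp: "is_coproduct C A Q P j1 j2"
    and p: "p \<in> hom C P B" and pj2: "p \<cdot> j2 = \<pi>2"
  shows "p \<in> RLP C (LLP C (retractions C) \<inter> weq C)"
proof -
  have \<pi>: "\<pi>1 \<in> hom C Q A" "\<pi>2 \<in> hom C Q B" using product_projections[OF pr] by auto
  have j2: "j2 \<in> hom C Q P" using coproduct_injections[OF cp] by auto
  obtain r where r: "r \<in> hom C P A"
    using coproduct_copair[OF cp id_in_hom \<pi>(1)] in_hom_Obj[OF \<pi>(1)] by blast
  have "lifts C i p" if iL: "i \<in> LLP C (retractions C)" and "i \<in> weq C" for i
  proof -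
    define A' B' where "A' = Dom C i" and "B' = Cod C i"
    have i: "i \<in> hom C A' B'" using iL arr_in_hom unfolding LLP_def A'_def B'_def by auto
    obtain g where g: "g \<in> hom C B' A'" using weqE[OF \<open>i \<in> weq C\<close>] A'_def B'_def by auto
    have AB': "A' \<in> Obj C" "B' \<in> Obj C" using in_hom_Obj[OF i] by auto
    obtain R k1 k2 where cR: "is_coproduct C A' B' R k1 k2" using coproduct_exists[OF AB'] .
    have k: "k1 \<in> hom C A' R" "k2 \<in> hom C B' R" using coproduct_injections[OF cR] by auto
    obtain \<rho> where \<rho>: "\<rho> \<in> hom C R B'" "\<rho> \<cdot> k1 = i" "\<rho> \<cdot> k2 = Id C B'"
      using coproduct_copair[OF cR i id_in_hom[OF AB'(2)]] by blast
    obtain h where h: "h \<in> hom C B' R" "h \<cdot> i = k1" "\<rho> \<cdot> h = Id C B'"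
      using core_cofibration_copair_section[OF iL i cR \<rho>] .
    show ?thesis
    proof (rule liftsI[OF i p])
      fix u v assume u: "u \<in> hom C A' P" and v: "v \<in> hom C B' B" and sq: "p \<cdot> u = v \<cdot> i"
      obtain w where w: "w \<in> hom C B' Q" "\<pi>2 \<cdot> w = v"
        using product_pair[OF pr comp_in_hom[OF comp_in_hom[OF g u] r] v] by blast
      obtain m where m: "m \<in> hom C R P" "m \<cdot> k1 = u" "m \<cdot> k2 = j2 \<cdot> w"
        using coproduct_copair[OF cR u comp_in_hom[OF w(1) j2]] by blast
      have pm: "p \<cdot> m = v \<cdot> \<rho>"
      proof (rule coproduct_ext[OF cR comp_in_hom[OF m(1) p] comp_in_hom[OF \<rho>(1) v]])
        show "(p \<cdot> m) \<cdot> k1 = (v \<cdot> \<rho>) \<cdot> k1"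
          using comp_assoc[OF k(1) m(1) p] comp_assoc[OF k(1) \<rho>(1) v] m(2) \<rho>(2) sq by simp
        show "(p \<cdot> m) \<cdot> k2 = (v \<cdot> \<rho>) \<cdot> k2"
          using comp_assoc[OF k(2) m(1) p] m(3) comp_assoc[OF w(1) j2 p] pj2 w(2)
            comp_assoc[OF k(2) \<rho>(1) v] \<rho>(3) comp_id_right[OF v] by simp
      qed
      have "(m \<cdot> h) \<cdot> i = u" using comp_assoc[OF i h(1) m(1)] h(2) m(2) by simp
      moreover have "p \<cdot> (m \<cdot> h) = v"
        using comp_assoc[OF h(1) m(1) p] pm comp_assoc[OF h(1) \<rho>(1) v] h(3) comp_id_right[OF v]
        by simp
      ultimately show "\<exists>h' \<in> hom C B' P. h' \<cdot> i = u \<and> p \<cdot> h' = v"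
        using comp_in_hom[OF h(1) m(1)] by blast
    qed
  qed
  then show ?thesis unfolding RLP_def using p by (auto simp: hom_def)
qed

lemma core_factorization_acyclic_cofibration_fibration:
  assumes "f \<in> Arr C"
  shows "\<exists>i p. i \<in> LLP C (retractions C) \<inter> weq C \<and> p \<in> RLP C (LLP C (retractions C) \<inter> weq C)
           \<and> Cod C i = Dom C p \<and> p \<cdot> i = f"
proof -
  define A B where "A = Dom C f" and "B = Cod C f"
  have f: "f \<in> hom C A B" using assms arr_in_hom A_def B_def by simp
  have AB: "A \<in> Obj C" "B \<in> Obj C" using in_hom_Obj[OF f] by auto
  obtain Q \<pi>1 \<pi>2 where pr: "is_product C A B Q \<pi>1 \<pi>2" using product_exists[OF AB] .
  have \<pi>: "\<pi>1 \<in> hom C Q A" "\<pi>2 \<in> hom C Q B" using product_projections[OF pr] by auto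
  obtain P j1 j2 where cp: "is_coproduct C A Q P j1 j2"
    using coproduct_exists AB(1) in_hom_Obj[OF \<pi>(1)] by blast
  have j1: "j1 \<in> hom C A P" using coproduct_injections[OF cp] by auto
  obtain p where p: "p \<in> hom C P B" "p \<cdot> j1 = f" "p \<cdot> j2 = \<pi>2"
    using coproduct_copair[OF cp f \<pi>(2)] by blast
  have "j1 \<in> LLP C (retractions C) \<inter> weq C"
    using coproduct_injection_LLP_retractions[OF cp] coproduct_injection_section[OF cp \<pi>(1)]
      sections_weq by blast
  moreover have "p \<in> RLP C (LLP C (retractions C) \<inter> weq C)"
    using copair_projection_core_fibration[OF pr cp p(1,3)] .
  ultimately show ?thesis using in_homD[OF j1] in_homD[OF p(1)] p(2) by metis
qed

lemma core_factorization_cofibration_acyclic_fibration: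
  assumes "f \<in> Arr C"
  shows "\<exists>i p. i \<in> LLP C (retractions C) \<and> p \<in> RLP C (LLP C (retractions C) \<inter> weq C) \<inter> weq C
           \<and> Cod C i = Dom C p \<and> p \<cdot> i = f"
proof -
  define A B where "A = Dom C f" and "B = Cod C f"
  have f: "f \<in> hom C A B" using assms arr_in_hom A_def B_def by simp
  have AB: "A \<in> Obj C" "B \<in> Obj C" using in_hom_Obj[OF f] by auto
  obtain P i1 i2 where cp: "is_coproduct C A B P i1 i2" using coproduct_exists[OF AB] .
  have i: "i1 \<in> hom C A P" "i2 \<in> hom C B P" using coproduct_injections[OF cp] by auto
  obtain q where q: "q \<in> hom C P B" "q \<cdot> i1 = f" "q \<cdot> i2 = Id C B"
    using coproduct_copair[OF cp f id_in_hom[OF AB(2)]] by blast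
  have "q \<in> retractions C" using q i(2) unfolding retractions_def hom_def by auto
  then have "q \<in> RLP C (LLP C (retractions C) \<inter> weq C) \<inter> weq C"
    using retractions_RLP_LLP retractions_weq by blast
  then show ?thesis
    using coproduct_injection_LLP_retractions[OF cp] in_homD[OF i(1)] in_homD[OF q(1)] q(2)
    by metis
qed

lemma model_structure_core: "model_structure C (core_ms C)"
proof -
  define Cof where "Cof = LLP C (retractions C)"
  define Fib where "Fib = RLP C (Cof \<inter> weq C)"
  have subsets: "weq C \<subseteq> Arr C" "Cof \<subseteq> Arr C" "Fib \<subseteq> Arr C"
    unfolding weq_def Cof_def Fib_def LLP_def RLP_def by auto
  have two_of_three: "\<forall>f \<in> Arr C. \<forall>g \<in> Arr C. Cod C f = Dom C g \<longrightarrow>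
        (f \<in> weq C \<and> g \<in> weq C \<longrightarrow> g \<cdot> f \<in> weq C) \<and>
        (f \<in> weq C \<and> g \<cdot> f \<in> weq C \<longrightarrow> g \<in> weq C) \<and>
        (g \<in> weq C \<and> g \<cdot> f \<in> weq C \<longrightarrow> f \<in> weq C)"
    by (intro ballI impI) (rule weq_two_out_of_three)
  have retracts: "\<forall>f g. is_retract_of C f g \<longrightarrow>
        (g \<in> weq C \<longrightarrow> f \<in> weq C) \<and> (g \<in> Cof \<longrightarrow> f \<in> Cof) \<and> (g \<in> Fib \<longrightarrow> f \<in> Fib)"
  proof (intro allI impI conjI)
    fix f g assume R: "is_retract_of C f g"
    show "g \<in> weq C \<Longrightarrow> f \<in> weq C" using retract_weq[OF R] .
    show "g \<in> Cof \<Longrightarrow> f \<in> Cof"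
      using retract_LLP[OF R _ retractions_arr] unfolding Cof_def .
    show "g \<in> Fib \<Longrightarrow> f \<in> Fib" using retract_RLP[OF R _ Int_lower1[THEN order_trans, OF subsets(2)]]
      unfolding Fib_def .
  qed
  have lifting: "\<forall>i \<in> Cof. \<forall>p \<in> Fib \<inter> weq C. lifts C i p" "\<forall>i \<in> Cof \<inter> weq C. \<forall>p \<in> Fib. lifts C i p"
    using core_acyclic_fibration_retraction unfolding Cof_def Fib_def LLP_def RLP_def by blast+
  have factorization:
    "\<forall>f \<in> Arr C. \<exists>i p. i \<in> Cof \<inter> weq C \<and> p \<in> Fib \<and> Cod C i = Dom C p \<and> p \<cdot> i = f"
    "\<forall>f \<in> Arr C. \<exists>i p. i \<in> Cof \<and> p \<in> Fib \<inter> weq C \<and> Cod C i = Dom C p \<and> p \<cdot> i = f"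
    unfolding Cof_def Fib_def
    by (intro ballI core_factorization_acyclic_cofibration_fibration
        core_factorization_cofibration_acyclic_fibration; assumption)+
  show ?thesis
    unfolding core_ms_def Let_def Cof_def[symmetric] Fib_def[symmetric] model_structure_def prod.case
    using subsets two_of_three retracts lifting factorization by (intro conjI) assumption+
qed

end

lemma model_structure_cocore:
  assumes "category C" and "bicomplete C"
  shows "model_structure C (cocore_ms C)"
proof -
  interpret op: finitely_bicomplete "opposite C"
    using category_opposite[OF assms(1)] bicomplete_opposite[OF assms(2)] by unfold_locales
  have "core_ms (opposite C) = (weq C, RLP C (sections C), LLP C (RLP C (sections C) \<inter> weq C))"
    by (simp add: core_ms_def Let_def)
  then show ?thesis
    using model_structure_opposite op.model_structure_core by (simp add: cocore_ms_def Let_def)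
qed

lemma id_left_quillen_equivalence_core_cocore:
  assumes "category C" and "bicomplete C"
  shows "id_left_quillen_equivalence C (core_ms C) (cocore_ms C)"
proof -
  interpret finitely_bicomplete C using assms by unfold_locales
  have "LLP C (retractions C) \<subseteq> LLP C (RLP C (sections C) \<inter> weq C)"
    using cocore_acyclic_fibration_retraction unfolding LLP_def by blast
  then show ?thesis
    using model_structure_core model_structure_cocore[OF assms]
    unfolding id_left_quillen_equivalence_def ms_cof_def ms_we_def core_ms_def cocore_ms_def Let_def
    by auto
qed

theorem proposition5:
  fixes C :: "('o, 'a) cat"
  assumes "category C"
    and "bicomplete C"
    and "splitting_coproducts C"
    and "disjoint_coproducts C"
  shows "id_left_quillen_equivalence C (core_ms C) (cocore_ms C)"
  using assms(1,2) by (rule id_left_quillen_equivalence_core_cocore)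

end
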